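(* Let $m,\gamma\in\mathbb{N}$ with $2\gamma<m$, and let $$P_{m,\gamma}(x):=\frac{1}{\sqrt{\gamma}}\sum_{v=0}^{2^\gamma-1}\sum_{j=0}^{\gamma-1}w_{2^{m-\gamma}v+2^{m-2\gamma}(v\oplus 2^j)}(x).$$ Let $\lambda=\{\lambda_n\}_{n\ge1}$ be a nondecreasing sequence of integers with $1\le\lambda_n\le n$. Let $x\in[0,1)$ and let $\ell(x)$ be an integer with $\ell(x)\in[2^{m-\gamma},2^m)\cap 2^{m-2\gamma}\mathbb{N}$ and $|S_{\ell(x)}(P_{m,\gamma};x)|\ge\frac14\sqrt{\gamma}$ (such an integer exists for every $x$). If $\lambda_{\ell(x)}<2^{m-2\gamma}$, then $$V^{(\lambda)}_{\ell(x)}(P_{m,\gamma};x)=S_{\ell(x)}(P_{m,\gamma};x),$$ and in particular $|V^{(\lambda)}_{\ell(x)}(P_{m,\gamma};x)|\ge\frac14\sqrt{\gamma}$.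
   Context: For nonnegative integers $n=\sum_j n_j2^j$, $m=\sum_j m_j2^j$ (binary expansions), $n\oplus m:=\sum_{j\ge0}|n_j-m_j|2^j$. Rademacher functions: $r_j(x):=(-1)^{\lfloor 2^{j+1}x\rfloor}$ on $[0,1)$; Walsh--Paley functions: $w_n(x):=\prod_{j\ge0}r_j(x)^{n_j}$. For $f\in L^1([0,1))$, $\widehat f(n):=\int_0^1 f w_n$, $S_n(f;x):=\sum_{k=0}^{n-1}\widehat f(k)w_k(x)$ (so $S_0=0$), and the de la Vallée Poussin means are $V_n^{(\lambda)}(f;x):=\frac{1}{\lambda_n+1}\sum_{k=n-\lambda_n}^{n}S_k(f;x)$. $2^s\mathbb{N}$ denotes the positive integer multiples of $2^s$. *)

theory Defs
  imports "HOL-Analysis.Analysis"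
begin

definition rademacher :: "nat \<Rightarrow> real \<Rightarrow> real" where
  "rademacher j x = (-1) powi \<lfloor>2 ^ (j + 1) * x\<rfloor>"

definition bdigit :: "nat \<Rightarrow> nat \<Rightarrow> nat" where
  "bdigit n j = (n div 2 ^ j) mod 2"

text \<open>Walsh--Paley functions: product over all j of r_j^{n_j}; digits vanish for j \<ge> n.\<close>
definition walsh :: "nat \<Rightarrow> real \<Rightarrow> real" where
  "walsh n x = (\<Prod>j<n. rademacher j x ^ bdigit n j)"

definition dyadic_add :: "nat \<Rightarrow> nat \<Rightarrow> nat" where
  "dyadic_add n m = (\<Sum>j<n + m. nat \<bar>int (bdigit n j) - int (bdigit m j)\<bar> * 2 ^ j)"

definition walsh_coeff :: "(real \<Rightarrow> real) \<Rightarrow> nat \<Rightarrow> real" where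
  "walsh_coeff f n = (LINT t:{0..<1}|lborel. f t * walsh n t)"

definition walsh_partial_sum :: "nat \<Rightarrow> (real \<Rightarrow> real) \<Rightarrow> real \<Rightarrow> real" where
  "walsh_partial_sum n f x = (\<Sum>k<n. walsh_coeff f k * walsh k x)"

definition vallee_poussin :: "(nat \<Rightarrow> nat) \<Rightarrow> nat \<Rightarrow> (real \<Rightarrow> real) \<Rightarrow> real \<Rightarrow> real" where
  "vallee_poussin lam n f x =
     (1 / (real (lam n) + 1)) * (\<Sum>k = n - lam n .. n. walsh_partial_sum k f x)"

definition P_poly :: "nat \<Rightarrow> nat \<Rightarrow> real \<Rightarrow> real" where
  "P_poly m \<gamma> x = (1 / sqrt (real \<gamma>)) *
     (\<Sum>v<2 ^ \<gamma>. \<Sum>j<\<gamma>.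
        walsh (2 ^ (m - \<gamma>) * v + 2 ^ (m - 2 * \<gamma>) * dyadic_add v (2 ^ j)) x)"

end

theory Submission
  imports Defs
begin

text \<open>Every frequency of \<open>P_poly m \<gamma>\<close> is a multiple of \<open>M = 2^(m-2\<gamma>)\<close>, so by orthogonality of the
  Walsh system all other Walsh coefficients vanish. Since \<open>l\<close> is a multiple of \<open>M\<close> and
  \<open>\<lambda>\<^sub>l < M\<close>, the window \<open>[l - \<lambda>\<^sub>l, l)\<close> contains no frequency of \<open>P_poly m \<gamma>\<close>; hence all partial
  sums \<open>S\<^sub>k\<close> with \<open>l - \<lambda>\<^sub>l \<le> k \<le> l\<close> coincide with \<open>S\<^sub>l\<close>, and so does their mean \<open>V\<^sub>l\<close>.\<close>

lemma rademacher_eq_if: "rademacher j x = (if even \<lfloor>2 ^ (j + 1) * x\<rfloor> then 1 else -1)"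
  by (simp add: rademacher_def power_int_minus_left)

lemma rademacher_measurable [measurable]: "rademacher j \<in> borel_measurable borel"
proof -
  have "(\<lambda>x. (\<lambda>i::int. \<lambda>x. if even i then 1 else (-1::real)) \<lfloor>(2::real) ^ (j + 1) * x\<rfloor> x)
      \<in> borel_measurable borel"
    by (rule measurable_compose_countable) measurable
  then show ?thesis by (simp add: rademacher_eq_if [abs_def])
qed

lemma walsh_measurable [measurable]: "walsh n \<in> borel_measurable borel"
  unfolding walsh_def [abs_def] by measurable

lemma rademacher_square: "rademacher j x ^ 2 = 1"
  by (simp add: rademacher_eq_if)

lemma abs_rademacher: "\<bar>rademacher j x\<bar> = 1"
  by (simp add: rademacher_eq_if)

lemma abs_walsh: "\<bar>walsh n x\<bar> = 1"
  unfolding walsh_def by (simp add: abs_prod power_abs abs_rademacher)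

lemma rademacher_periodic: "rademacher j (x + of_int k / 2 ^ j) = rademacher j x"
proof -
  have "(2::real) ^ (j + 1) * (x + of_int k / 2 ^ j) = 2 ^ (j + 1) * x + of_int (2 * k)"
    by (simp add: field_simps)
  then have "\<lfloor>(2::real) ^ (j + 1) * (x + of_int k / 2 ^ j)\<rfloor> = \<lfloor>2 ^ (j + 1) * x\<rfloor> + 2 * k"
    by (metis floor_add_int)
  then show ?thesis by (simp add: rademacher_eq_if)
qed

lemma rademacher_add_1: "rademacher j (x + 1) = rademacher j x"
  using rademacher_periodic [of j x "2 ^ j"] by simp

lemma rademacher_half_period_shift: "rademacher j (x + 1 / 2 ^ (j + 1)) = - rademacher j x"
proof -
  have "\<lfloor>2 ^ (j + 1) * (x + 1 / 2 ^ (j + 1))\<rfloor> = \<lfloor>2 ^ (j + 1) * x\<rfloor> + 1"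
    by (simp add: distrib_left)
  then show ?thesis by (simp add: rademacher_eq_if)
qed

lemma rademacher_shift_by_coarser_half_period:
  assumes "i < j"
  shows "rademacher j (x + 1 / 2 ^ (i + 1)) = rademacher j x"
proof -
  have "j = (i + 1) + (j - (i + 1))"
    using assms by simp
  then have "(2::real) ^ j = 2 ^ (i + 1) * 2 ^ (j - (i + 1))"
    by (metis power_add)
  then have "(1::real) / 2 ^ (i + 1) = of_int (2 ^ (j - (i + 1))) / 2 ^ j"
    by simp
  then show ?thesis
    using rademacher_periodic [of j x "2 ^ (j - (i + 1))"] by simp
qed

lemma set_integral_antiperiodic_eq_0:
  fixes f :: "real \<Rightarrow> real"
  assumes [measurable]: "f \<in> borel_measurable borel"
    and bounded: "\<And>x. \<bar>f x\<bar> \<le> 1"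
    and periodic: "\<And>x. f (x + 1) = f x"
    and antiperiodic: "\<And>x. f (x + h) = - f x"
    and "0 < h" "h \<le> 1"
  shows "(LINT x:{0..<1}|lborel. f x) = 0"
proof -
  have set_integrable: "set_integrable lborel {a..b} f" for a b
    unfolding set_integrable_def
    by (rule integrableI_bounded_set_indicator [where B = 1])
      (use bounded in \<open>auto simp: emeasure_lborel_Icc_eq\<close>)
  have integrable_on: "f integrable_on {a..b}" for a b
    using set_borel_integral_eq_integral(1) [OF set_integrable] .
  have "(LINT x:{0..<1}|lborel. f x) = (LINT x:{0..1}|lborel. f x)"
  proof (rule set_integral_cong_set [symmetric])
    show "set_borel_measurable lborel {0..<1} f" "set_borel_measurable lborel {0..1} f"
      unfolding set_borel_measurable_def by measurable
    show "AE x in lborel. ((x::real) \<in> {0..<1}) = (x \<in> {0..1})"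
      using AE_lborel_singleton [of 1] by eventually_elim auto
  qed
  also have "\<dots> = integral {0..1} f"
    using set_borel_integral_eq_integral(2) [OF set_integrable] .
  also have "\<dots> = 0"
  proof -
    have "integral {h-h..1+h-h} (\<lambda>x. f (x + h)) = integral {h..1+h} f"
      by (rule integral_shift_real_ivl)
    then have shift_h: "- integral {0..1} f = integral {h..1+h} f"
      by (simp add: antiperiodic integral_neg)
    have "integral {1-1..1+h-1} (\<lambda>x. f (x + 1)) = integral {1..1+h} f"
      by (rule integral_shift_real_ivl)
    then have shift_1: "integral {0..h} f = integral {1..1+h} f"
      by (simp add: periodic)
    have "integral {0..h} f + integral {h..1} f = integral {0..1} f"
      "integral {h..1} f + integral {1..1+h} f = integral {h..1+h} f"
      by (rule Henstock_Kurzweil_Integration.integral_combine;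
          use \<open>0 < h\<close> \<open>h \<le> 1\<close> integrable_on in simp)+
    then show ?thesis using shift_h shift_1 by linarith
  qed
  finally show ?thesis .
qed

lemma bdigit_eq_0:
  assumes "n \<le> j"
  shows "bdigit n j = 0"
proof -
  have "n < 2 ^ j" using assms less_exp [of j] by linarith
  then show ?thesis by (simp add: bdigit_def)
qed

lemma bdigit_0_or_1: "bdigit n j = 0 \<or> bdigit n j = 1"
  unfolding bdigit_def by presburger

lemma walsh_eq_prod_upto: "n \<le> N \<Longrightarrow> walsh n x = (\<Prod>j<N. rademacher j x ^ bdigit n j)"
  unfolding walsh_def by (rule prod.mono_neutral_left) (auto simp: bdigit_eq_0)

lemma bdigit_eq_iff: "(\<forall>j. bdigit n j = bdigit k j) \<longleftrightarrow> n = k"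
proof
  assume "\<forall>j. bdigit n j = bdigit k j"
  then have "bit n j = bit k j" for j
    by (simp add: bit_iff_odd bdigit_def odd_iff_mod_2_eq_one)
  then show "n = k"
    by (simp add: bit_eq_iff)
qed simp

lemma walsh_orthogonal:
  assumes "n \<noteq> k"
  shows "(LINT t:{0..<1}|lborel. walsh n t * walsh k t) = 0"
proof -
  define N where "N = n + k"
  define e where "e j = bdigit n j + bdigit k j" for j
  define J where "J = (LEAST j. bdigit n j \<noteq> bdigit k j)"
  have digit_J: "bdigit n J \<noteq> bdigit k J"
    unfolding J_def by (rule LeastI_ex) (use assms bdigit_eq_iff in blast)
  have digits_below_J: "bdigit n j = bdigit k j" if "j < J" for j
    using that not_less_Least unfolding J_def by blast
  have "J < N"
  proof (rule ccontr)
    assume "\<not> J < N"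
    then show False using digit_J by (simp add: N_def bdigit_eq_0)
  qed
  have "e J = 1"
    using digit_J bdigit_0_or_1 [of n J] bdigit_0_or_1 [of k J] by (auto simp: e_def)
  define F where "F t = (\<Prod>j<N. rademacher j t ^ e j)" for t
  have walsh_product: "walsh n t * walsh k t = F t" for t
    using walsh_eq_prod_upto [of n N] walsh_eq_prod_upto [of k N]
    by (simp add: N_def F_def e_def power_add prod.distrib)
  define h :: real where "h = 1 / 2 ^ (J + 1)"
  text \<open>Shifting by \<open>h\<close> flips the sign of \<open>r\<^sub>J\<close> only; the factors below \<open>J\<close> occur squared.\<close>
  have factor_shift: "rademacher j (t + h) ^ e j = (if j = J then -1 else 1) * rademacher j t ^ e j"
    for j t
  proof -
    consider "j < J" | "j = J" | "J < j" by linarith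
    then show ?thesis
    proof cases
      case 1
      then have "e j = 2 * bdigit n j" using digits_below_J by (simp add: e_def)
      then show ?thesis using 1 by (simp add: power_mult rademacher_square)
    next
      case 2
      then show ?thesis
        using rademacher_half_period_shift [of J t] by (simp add: \<open>e J = 1\<close> h_def)
    next
      case 3
      then show ?thesis
        using rademacher_shift_by_coarser_half_period [of J j t] by (simp add: h_def)
    qed
  qed
  have "F (t + h) = - F t" for t
  proof -
    have "F (t + h) = (\<Prod>j<N. if j = J then -1 else 1) * F t"
      unfolding F_def by (simp add: factor_shift prod.distrib)
    then show ?thesis using \<open>J < N\<close> by (simp add: prod.delta)
  qed
  moreover have "F (t + 1) = F t" for t
    unfolding F_def by (simp add: rademacher_add_1)
  moreover have "\<bar>F t\<bar> \<le> 1" for t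
    unfolding walsh_product [symmetric] by (simp add: abs_mult abs_walsh)
  moreover have "F \<in> borel_measurable borel"
    unfolding F_def [abs_def] by measurable
  moreover have "0 < h" "h \<le> 1"
    using one_le_power [of "2::real" "J + 1"] by (auto simp: h_def)
  ultimately show ?thesis
    unfolding walsh_product by (intro set_integral_antiperiodic_eq_0)
qed

lemma set_integrable_walsh_mult: "set_integrable lborel {0..<1} (\<lambda>t. walsh n t * walsh k t)"
  unfolding set_integrable_def
  by (rule integrableI_bounded_set_indicator [where B = 1]) (auto simp: abs_mult abs_walsh)

lemma walsh_coeff_walsh_polynomial_eq_0:
  assumes "k \<notin> freq ` I"
  shows "walsh_coeff (\<lambda>x. c * (\<Sum>i\<in>I. walsh (freq i) x)) k = 0"
proof -
  have "walsh_coeff (\<lambda>x. c * (\<Sum>i\<in>I. walsh (freq i) x)) k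
      = c * (LINT t:{0..<1}|lborel. \<Sum>i\<in>I. walsh (freq i) t * walsh k t)"
    unfolding walsh_coeff_def by (simp add: sum_distrib_right mult.assoc)
  also have "\<dots> = c * (\<Sum>i\<in>I. LINT t:{0..<1}|lborel. walsh (freq i) t * walsh k t)"
    using set_integrable_walsh_mult
    unfolding set_lebesgue_integral_def set_integrable_def by (simp add: sum_distrib_left)
  also have "\<dots> = 0"
    using assms by (auto intro!: sum.neutral walsh_orthogonal)
  finally show ?thesis .
qed

lemma walsh_coeff_P_poly_eq_0:
  assumes "\<not> 2 ^ (m - 2 * \<gamma>) dvd k"
  shows "walsh_coeff (P_poly m \<gamma>) k = 0"
proof -
  define freq :: "nat \<times> nat \<Rightarrow> nat" where
    "freq i = 2 ^ (m - \<gamma>) * fst i + 2 ^ (m - 2 * \<gamma>) * dyadic_add (fst i) (2 ^ snd i)" for i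
  have P_poly_eq: "P_poly m \<gamma> = (\<lambda>x. 1 / sqrt \<gamma> * (\<Sum>i\<in>{..<2 ^ \<gamma>} \<times> {..<\<gamma>}. walsh (freq i) x))"
    unfolding P_poly_def freq_def by (simp add: sum.cartesian_product split_def)
  have "2 ^ (m - 2 * \<gamma>) dvd freq i" for i
    using le_imp_power_dvd [of "m - 2 * \<gamma>" "m - \<gamma>" "2::nat"] by (simp add: freq_def)
  then have "k \<notin> freq ` ({..<2 ^ \<gamma>} \<times> {..<\<gamma>})"
    using assms by blast
  then show ?thesis
    unfolding P_poly_eq by (rule walsh_coeff_walsh_polynomial_eq_0)
qed

lemma walsh_partial_sum_eq_if_coeffs_vanish:
  assumes "k \<le> l" and vanish: "\<And>i. k \<le> i \<Longrightarrow> i < l \<Longrightarrow> walsh_coeff f i = 0"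
  shows "walsh_partial_sum k f x = walsh_partial_sum l f x"
proof -
  have "walsh_partial_sum l f x
      = walsh_partial_sum k f x + (\<Sum>i=k..<l. walsh_coeff f i * walsh i x)"
    using sum.atLeastLessThan_concat [of 0 k l "\<lambda>i. walsh_coeff f i * walsh i x"] assms(1)
    by (simp add: walsh_partial_sum_def atLeast0LessThan)
  also have "(\<Sum>i=k..<l. walsh_coeff f i * walsh i x) = 0"
    using vanish by simp
  finally show ?thesis by simp
qed

lemma vallee_poussin_eq_partial_sum:
  assumes "lam n \<le> n"
    and partial_sums_constant:
      "\<And>k. n - lam n \<le> k \<Longrightarrow> k \<le> n \<Longrightarrow> walsh_partial_sum k f x = walsh_partial_sum n f x"
  shows "vallee_poussin lam n f x = walsh_partial_sum n f x"
proof -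
  have "vallee_poussin lam n f x
      = 1 / (real (lam n) + 1) * (\<Sum>k = n - lam n..n. walsh_partial_sum n f x)"
    unfolding vallee_poussin_def
    by (intro arg_cong2 [where f = times] refl sum.cong partial_sums_constant) auto
  also have "\<dots> = walsh_partial_sum n f x"
    using assms(1) by (simp add: field_simps)
  finally show ?thesis .
qed

lemma not_dvd_in_window_below_multiple:
  fixes M l i d :: nat
  assumes "M dvd l" "d < M" "l - d \<le> i" "i < l"
  shows "\<not> M dvd i"
proof
  assume "M dvd i"
  then have "M dvd l - i"
    using assms(1) by (rule dvd_diff_nat [rotated])
  then have "M \<le> l - i"
    using assms(4) by (simp add: dvd_imp_le)
  then show False
    using assms(2,3) by linarith
qed

lemma walsh_partial_sum_P_poly_eq_below_multiple:
  assumes "2 ^ (m - 2 * \<gamma>) dvd l" "d < 2 ^ (m - 2 * \<gamma>)" "l - d \<le> k" "k \<le> l"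
  shows "walsh_partial_sum k (P_poly m \<gamma>) x = walsh_partial_sum l (P_poly m \<gamma>) x"
proof (rule walsh_partial_sum_eq_if_coeffs_vanish)
  fix i
  assume "k \<le> i" "i < l"
  then have "l - d \<le> i" "i < l"
    using assms(3) by linarith+
  then show "walsh_coeff (P_poly m \<gamma>) i = 0"
    using assms(1,2) by (intro walsh_coeff_P_poly_eq_0 not_dvd_in_window_below_multiple)
qed (fact assms(4))

theorem corollary2p2:
  fixes m \<gamma> :: nat and lam :: "nat \<Rightarrow> nat" and x :: real and l :: nat
  assumes "2 * \<gamma> < m"
    and lam_bounds: "\<forall>n\<ge>1. 1 \<le> lam n \<and> lam n \<le> n"
    and lam_mono: "\<forall>n\<ge>1. lam n \<le> lam (Suc n)"
    and "x \<in> {0..<1}"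
    and "2 ^ (m - \<gamma>) \<le> l" and "l < 2 ^ m" and "2 ^ (m - 2 * \<gamma>) dvd l"
    and "\<bar>walsh_partial_sum l (P_poly m \<gamma>) x\<bar> \<ge> sqrt (real \<gamma>) / 4"
    and "lam l < 2 ^ (m - 2 * \<gamma>)"
  shows "vallee_poussin lam l (P_poly m \<gamma>) x = walsh_partial_sum l (P_poly m \<gamma>) x
         \<and> \<bar>vallee_poussin lam l (P_poly m \<gamma>) x\<bar> \<ge> sqrt (real \<gamma>) / 4"
proof -
  have "1 \<le> l"
    using assms(5) one_le_power [of "2::nat" "m - \<gamma>"] by linarith
  then have "lam l \<le> l"
    using lam_bounds by blast
  moreover have "walsh_partial_sum k (P_poly m \<gamma>) x = walsh_partial_sum l (P_poly m \<gamma>) x"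
    if "l - lam l \<le> k" "k \<le> l" for k
    using assms(7,9) that by (rule walsh_partial_sum_P_poly_eq_below_multiple)
  ultimately have "vallee_poussin lam l (P_poly m \<gamma>) x = walsh_partial_sum l (P_poly m \<gamma>) x"
    by (rule vallee_poussin_eq_partial_sum)
  then show ?thesis
    using assms(8) by simp
qed

end
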